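(* The convolution $(g_1\ast g_2)(A)=\min_{B\subseteq A}\,[g_1(B)+g_2(A\setminus B)]$ of two submodular functions $g_1,g_2$ is not in general submodular. In particular, there exist a directed graph $\mathcal{G}=(\mathcal{V},\mathcal{E})$ and a normalized monotone nondecreasing submodular $f:2^{\mathcal{E}}\to\mathbb{R}_+$ such that, with $\mathrm{cap}^{\mathrm{out}}(A)=\sum_{v\in\mathcal{V}}f(A\cap\delta^+(v))$ and $\mathrm{cap}^{\mathrm{in}}(A)=\sum_{v\in\mathcal{V}}f(A\cap\delta^-(v))$, the function $h=\mathrm{cap}^{\mathrm{out}}\ast\mathrm{cap}^{\mathrm{in}}$ (the cut cost function of the dual of the corresponding polymatroidal maximum flow) is not submodular.
   Context: $\delta^+(v)$ and $\delta^-(v)$ denote the sets of edges leaving and entering node $v$. A set function $g$ on $2^{\mathcal{E}}$ is submodular if $g(A)+g(B)\ge g(A\cup B)+g(A\cap B)$ for all $A,B\subseteq\mathcal{E}$. *)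

theory Defs
  imports Main "Graph_Theory.Digraph"
begin

definition submodular_on :: "'e set \<Rightarrow> ('e set \<Rightarrow> real) \<Rightarrow> bool" where
  "submodular_on E g \<longleftrightarrow>
     (\<forall>A B. A \<subseteq> E \<longrightarrow> B \<subseteq> E \<longrightarrow> g A + g B \<ge> g (A \<union> B) + g (A \<inter> B))"

definition monotone_on_subsets :: "'e set \<Rightarrow> ('e set \<Rightarrow> real) \<Rightarrow> bool" where
  "monotone_on_subsets E g \<longleftrightarrow> (\<forall>A B. A \<subseteq> B \<longrightarrow> B \<subseteq> E \<longrightarrow> g A \<le> g B)"

definition convolution :: "('e set \<Rightarrow> real) \<Rightarrow> ('e set \<Rightarrow> real) \<Rightarrow> 'e set \<Rightarrow> real" where
  "convolution g1 g2 A = Min ((\<lambda>B. g1 B + g2 (A - B)) ` Pow A)"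

definition cap_out :: "('v, 'e) pre_digraph \<Rightarrow> ('e set \<Rightarrow> real) \<Rightarrow> 'e set \<Rightarrow> real" where
  "cap_out G f A = (\<Sum>v\<in>verts G. f (A \<inter> out_arcs G v))"

definition cap_in :: "('v, 'e) pre_digraph \<Rightarrow> ('e set \<Rightarrow> real) \<Rightarrow> 'e set \<Rightarrow> real" where
  "cap_in G f A = (\<Sum>v\<in>verts G. f (A \<inter> in_arcs G v))"

end

theory Submission
  imports Defs
begin

text \<open>Take f to be the rank function of the uniform matroid of rank one (1 on nonempty sets) on
  the digraph with arcs e0: 0\<rightarrow>1, e1: 0\<rightarrow>2, e2: 1\<rightarrow>2. The arcs e0, e1 share a tail and e1, e2 share
  a head, so h({e0,e1}) = h({e1,e2}) = 1 by charging everything to one out-star resp. one in-star,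
  and h({e1}) = 1. But e0 and e2 share neither tail nor head, so every split of {e0,e1,e2} between
  the out-stars and the in-stars pays for two stars. Hence
  h({e0,e1,e2}) + h({e1}) = 3 > 2 = h({e0,e1}) + h({e1,e2}).\<close>

lemma convolution_le:
  assumes "finite A" "B \<subseteq> A"
  shows "convolution g1 g2 A \<le> g1 B + g2 (A - B)"
  unfolding convolution_def using assms by (intro Min_le) auto

lemma convolution_ge:
  assumes "finite A" "\<And>B. B \<subseteq> A \<Longrightarrow> c \<le> g1 B + g2 (A - B)"
  shows "c \<le> convolution g1 g2 A"
  unfolding convolution_def using assms by (subst Min_ge_iff) auto

definition rank_one :: "'a set \<Rightarrow> real" where
  "rank_one A = (if A = {} then 0 else 1)"

lemma submodular_on_rank_one: "submodular_on E rank_one"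
  unfolding submodular_on_def rank_one_def by auto

lemma monotone_on_subsets_rank_one: "monotone_on_subsets E rank_one"
  unfolding monotone_on_subsets_def rank_one_def by auto

definition triangle :: "(nat, nat) pre_digraph" where
  "triangle = \<lparr>verts = {0,1,2}, arcs = {0,1,2}, tail = (\<lambda>e. if e = 2 then 1 else 0),
               head = (\<lambda>e. if e = 0 then 1 else 2)\<rparr>"

lemma fin_digraph_triangle: "fin_digraph triangle"
  unfolding fin_digraph_def fin_digraph_axioms_def wf_digraph_def triangle_def by auto

lemma arcs_triangle: "arcs triangle = {0,1,2}"
  by (simp add: triangle_def)

lemma cap_out_triangle: "cap_out triangle rank_one A = rank_one (A \<inter> {0,1}) + rank_one (A \<inter> {2})"
proof -
  have "out_arcs triangle 0 = {0,1}" "out_arcs triangle 1 = {2}" "out_arcs triangle 2 = {}"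
    by (auto simp: triangle_def out_arcs_def)
  then show ?thesis
    by (simp add: cap_out_def triangle_def rank_one_def)
qed

lemma cap_in_triangle: "cap_in triangle rank_one A = rank_one (A \<inter> {0}) + rank_one (A \<inter> {1,2})"
proof -
  have "in_arcs triangle 0 = {}" "in_arcs triangle 1 = {0}" "in_arcs triangle 2 = {1,2}"
    by (auto simp: triangle_def in_arcs_def)
  then show ?thesis
    by (simp add: cap_in_def triangle_def rank_one_def)
qed

abbreviation cut_cost :: "nat set \<Rightarrow> real" where
  "cut_cost \<equiv> convolution (cap_out triangle rank_one) (cap_in triangle rank_one)"

lemma cut_cost_tail_pair: "cut_cost {0,1} \<le> 1"
proof -
  have "cut_cost {0,1} \<le> cap_out triangle rank_one {0,1} + cap_in triangle rank_one {}"
    using convolution_le[of "{0,1::nat}" "{0,1}"] by simp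
  then show ?thesis
    by (simp add: cap_out_triangle cap_in_triangle rank_one_def)
qed

lemma cut_cost_head_pair: "cut_cost {1,2} \<le> 1"
proof -
  have "cut_cost {1,2} \<le> cap_out triangle rank_one {} + cap_in triangle rank_one {1,2}"
    using convolution_le[of "{1,2::nat}" "{}"] by simp
  then show ?thesis
    by (simp add: cap_out_triangle cap_in_triangle rank_one_def)
qed

lemma cut_cost_all: "2 \<le> cut_cost {0,1,2}"
  by (rule convolution_ge) (auto simp: cap_out_triangle cap_in_triangle rank_one_def subset_insert_iff)

lemma cut_cost_middle: "1 \<le> cut_cost {1}"
  by (rule convolution_ge) (auto simp: cap_out_triangle cap_in_triangle rank_one_def subset_singleton_iff)

lemma not_submodular_cut_cost: "\<not> submodular_on (arcs triangle) cut_cost"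
proof
  assume "submodular_on (arcs triangle) cut_cost"
  then have "cut_cost ({0,1} \<union> {1,2}) + cut_cost ({0,1} \<inter> {1,2}) \<le> cut_cost {0,1} + cut_cost {1,2}"
    unfolding submodular_on_def arcs_triangle by (metis insert_mono subset_insertI subset_insertI2)
  moreover have "{0,1} \<union> {1,2} = {0,1,2::nat}" "{0,1} \<inter> {1,2} = {1::nat}"
    by auto
  ultimately show False
    using cut_cost_tail_pair cut_cost_head_pair cut_cost_all cut_cost_middle by simp
qed

theorem proposition2:
  shows "\<exists>(G :: (nat, nat) pre_digraph) (f :: nat set \<Rightarrow> real).
           fin_digraph G \<and>
           f {} = 0 \<and>
           (\<forall>A. A \<subseteq> arcs G \<longrightarrow> f A \<ge> 0) \<and>
           monotone_on_subsets (arcs G) f \<and>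
           submodular_on (arcs G) f \<and>
           \<not> submodular_on (arcs G) (convolution (cap_out G f) (cap_in G f))"
  using fin_digraph_triangle monotone_on_subsets_rank_one submodular_on_rank_one
    not_submodular_cut_cost
  by (intro exI[of _ triangle] exI[of _ rank_one]) (auto simp: rank_one_def)

end
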